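(* Let $G=[G^{(1)},\dots,G^{(p)}]\in\mathbb{R}^{n\times m}$ with $G^{(i)}\in\mathbb{R}^{n\times k_i}$ and $G^\top G=nI_m$, let $\sigma^2>0$, let $\bar\theta=[\bar\theta^{(1)\top},\dots,\bar\theta^{(p)\top}]^\top\in\mathbb{R}^m$ be fixed and $y=G\bar\theta+v$ with $v\sim\mathcal N(0,\sigma^2I_n)$. For $\lambda\in\mathbb{R}_+^p$ let $\Lambda=\mathrm{blockdiag}(\lambda_1I_{k_1},\dots,\lambda_pI_{k_p})$, $\hat\theta(\lambda)=\Lambda G^\top(G\Lambda G^\top+\sigma^2I_n)^{-1}y$ and $MSE(\lambda)=\mathrm{tr}\,\mathbb{E}_v[(\hat\theta(\lambda)-\bar\theta)(\hat\theta(\lambda)-\bar\theta)^\top]$. Then $MSE(\lambda)$ is globally minimized by choosing $$\lambda_i=\lambda_i^{opt}:=\frac{\|\bar\theta^{(i)}\|^2}{k_i},\qquad i=1,\dots,p.$$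
   Context: $\mathbb{E}_v$ denotes expectation with respect to the noise $v$ only, with $\lambda$ and $\bar\theta$ fixed. $\mathbb{R}_+=[0,\infty)$; $\|\cdot\|$ is the Euclidean norm. *)

theory Defs
  imports "HOL-Probability.Probability"
begin

text \<open>Note: normal_density mu s takes the standard deviation s, so the variance is s^2.\<close>
definition noise_measure :: "real \<Rightarrow> ('n::finite \<Rightarrow> real) measure" where
  "noise_measure s = PiM UNIV (\<lambda>_. density lborel (normal_density 0 s))"

definition outer_prod :: "real^'m \<Rightarrow> real^'m^'m" where
  "outer_prod x = (\<chi> i j. x $ i * x $ j)"

text \<open>Block-diagonal regularisation matrix Lambda = blockdiag(lambda_1 I_{k_1},...,lambda_p I_{k_p});
  blk j is the index of the block containing column/coordinate j.\<close>
definition Lam :: "('m::finite \<Rightarrow> 'p) \<Rightarrow> ('p \<Rightarrow> real) \<Rightarrow> real^'m^'m" where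
  "Lam blk lam = (\<chi> i j. if i = j then lam (blk i) else 0)"

definition theta_hat ::
  "real^'m^'n \<Rightarrow> ('m::finite \<Rightarrow> 'p) \<Rightarrow> real \<Rightarrow> ('p \<Rightarrow> real) \<Rightarrow> real^'n \<Rightarrow> real^'m" where
  "theta_hat G blk s lam y =
     (Lam blk lam ** transpose G **
        matrix_inv (G ** Lam blk lam ** transpose G + (s^2) *\<^sub>R mat 1)) *v y"

definition MSE ::
  "real^'m^'n \<Rightarrow> ('m::finite \<Rightarrow> 'p) \<Rightarrow> real \<Rightarrow> real^'m \<Rightarrow> ('p \<Rightarrow> real) \<Rightarrow> real" where
  "MSE G blk s theta_bar lam =
     trace (integral\<^sup>L (noise_measure s)
       (\<lambda>v::'n::finite \<Rightarrow> real. outer_prod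
          (theta_hat G blk s lam (G *v theta_bar + (\<chi> i. v i)) - theta_bar)))"

definition lam_opt :: "('m::finite \<Rightarrow> 'p) \<Rightarrow> real^'m \<Rightarrow> 'p \<Rightarrow> real" where
  "lam_opt blk theta_bar i =
     (\<Sum>j\<in>{j. blk j = i}. (theta_bar $ j)^2) / real (card {j. blk j = i})"

end

theory Submission
  imports Defs
begin

(* Since G^T G = n I, the push-through identity
     Lambda G^T (G Lambda G^T + s^2 I)^-1 = D G^T,   D = diag(lambda_i / (n lambda_i + s^2)),
   shows that the estimator only shrinks the least-squares estimate G^T y / n coordinatewise.
   Hence the MSE splits over the blocks into squared bias plus variance, block i contributing
     (s^2 / (n x + s^2))^2 |theta^(i)|^2 + k_i n s^2 (x / (n x + s^2))^2    at x = lambda_i,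
   and this function of x exceeds its value at x = |theta^(i)|^2 / k_i by
     n s^4 (|theta^(i)|^2 - k_i x)^2 / ((n x + s^2)^2 (n |theta^(i)|^2 + k_i s^2)) >= 0. *)

lemma integrable_normal_density_power:
  assumes "s > 0"
  shows "integrable (density lborel (normal_density 0 s)) (\<lambda>x::real. x ^ k)"
  using integrable_normal_moment[OF assms, of 0 k] by (subst integrable_density) auto

lemma normal_density_moments:
  assumes "s > 0"
  shows "measure (density lborel (normal_density 0 s)) UNIV = 1"
    and "integral\<^sup>L (density lborel (normal_density 0 s)) (\<lambda>x::real. x) = 0"
    and "integral\<^sup>L (density lborel (normal_density 0 s)) (\<lambda>x::real. x\<^sup>2) = s\<^sup>2"
proof -
  show "measure (density lborel (normal_density 0 s)) UNIV = 1"
    using prob_space.prob_space[OF prob_space_normal_density[OF assms]] by simp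
  show "integral\<^sup>L (density lborel (normal_density 0 s)) (\<lambda>x::real. x) = 0"
    using integral_normal_moment_odd[OF assms, of 0 0] by (subst integral_density) auto
  show "integral\<^sup>L (density lborel (normal_density 0 s)) (\<lambda>x::real. x\<^sup>2) = s\<^sup>2"
    using integral_normal_moment_even[OF assms, of 0 1]
    by (subst integral_density) (auto simp: power2_eq_square)
qed

lemma prob_space_noise_measure:
  "s > 0 \<Longrightarrow> prob_space (noise_measure s :: ('n::finite \<Rightarrow> real) measure)"
  unfolding noise_measure_def by (intro prob_space_PiM prob_space_normal_density)

lemma noise_measure_prod_power:
  fixes c :: "'n::finite \<Rightarrow> nat"
  assumes "s > 0"
  shows "integrable (noise_measure s) (\<lambda>v. \<Prod>i\<in>UNIV. v i ^ c i)"
    and "integral\<^sup>L (noise_measure s) (\<lambda>v. \<Prod>i\<in>UNIV. v i ^ c i)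
       = (\<Prod>i\<in>UNIV. integral\<^sup>L (density lborel (normal_density 0 s)) (\<lambda>x::real. x ^ c i))"
proof -
  interpret prob_space "density lborel (normal_density 0 s)"
    using prob_space_normal_density[OF assms] .
  interpret product_sigma_finite "\<lambda>_::'n. density lborel (normal_density 0 s)"
    by unfold_locales
  show "integrable (noise_measure s) (\<lambda>v. \<Prod>i\<in>UNIV. v i ^ c i)"
    unfolding noise_measure_def
    using product_integrable_prod[of UNIV "\<lambda>i x. x ^ c i"]
      integrable_normal_density_power[OF assms] by auto
  show "integral\<^sup>L (noise_measure s) (\<lambda>v. \<Prod>i\<in>UNIV. v i ^ c i)
       = (\<Prod>i\<in>UNIV. integral\<^sup>L (density lborel (normal_density 0 s)) (\<lambda>x::real. x ^ c i))"
    unfolding noise_measure_def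
    using product_integral_prod[of UNIV "\<lambda>i x. x ^ c i"]
      integrable_normal_density_power[OF assms] by auto
qed

lemma noise_measure_coord:
  fixes k :: "'n::finite"
  assumes "s > 0"
  shows "integrable (noise_measure s) (\<lambda>v. v k)"
    and "integral\<^sup>L (noise_measure s) (\<lambda>v. v k) = 0"
proof -
  define c where "c i = (if i = k then 1 else 0 :: nat)" for i
  have c: "(\<Prod>i\<in>UNIV. v i ^ c i) = v k" for v :: "'n \<Rightarrow> real"
    by (simp add: c_def if_distrib cong: if_cong)
  show "integrable (noise_measure s) (\<lambda>v. v k)"
    using noise_measure_prod_power(1)[OF assms, of c] by (simp add: c)
  have "integral\<^sup>L (noise_measure s) (\<lambda>v. v k)
      = (\<Prod>i\<in>UNIV. integral\<^sup>L (density lborel (normal_density 0 s)) (\<lambda>x::real. x ^ c i))"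
    using noise_measure_prod_power(2)[OF assms, of c] by (simp add: c)
  also have "\<dots> = 0"
    by (rule prod_zero[OF finite bexI[of _ k]])
      (simp_all add: c_def normal_density_moments[OF assms])
  finally show "integral\<^sup>L (noise_measure s) (\<lambda>v. v k) = 0" .
qed

lemma noise_measure_coord_mult:
  fixes k l :: "'n::finite"
  assumes "s > 0"
  shows "integrable (noise_measure s) (\<lambda>v. v k * v l)"
    and "integral\<^sup>L (noise_measure s) (\<lambda>v. v k * v l) = (if k = l then s\<^sup>2 else 0)"
proof -
  define c where "c i = (of_bool (i = k) + of_bool (i = l) :: nat)" for i
  have c: "(\<Prod>i\<in>UNIV. v i ^ c i) = v k * v l" for v :: "'n \<Rightarrow> real"
  proof -
    have "v i ^ c i = (if i = k then v i else 1) * (if i = l then v i else 1)" for i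
      by (simp add: c_def power_add)
    then show ?thesis
      by (simp add: prod.distrib)
  qed
  show "integrable (noise_measure s) (\<lambda>v. v k * v l)"
    using noise_measure_prod_power(1)[OF assms, of c] by (simp add: c)
  have "integral\<^sup>L (noise_measure s) (\<lambda>v. v k * v l)
      = (\<Prod>i\<in>UNIV. integral\<^sup>L (density lborel (normal_density 0 s)) (\<lambda>x::real. x ^ c i))"
    using noise_measure_prod_power(2)[OF assms, of c] by (simp add: c)
  also have "\<dots> = (if k = l then s\<^sup>2 else 0)"
  proof (cases "k = l")
    case True
    have "integral\<^sup>L (density lborel (normal_density 0 s)) (\<lambda>x::real. x ^ c i)
        = (if i = k then s\<^sup>2 else 1)" for i
      by (cases "i = k")
        (simp_all add: c_def True power2_eq_square
          normal_density_moments[OF assms, unfolded power2_eq_square])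
    with True show ?thesis
      by simp
  next
    case False
    show ?thesis
      unfolding if_not_P[OF False]
      by (rule prod_zero[OF finite bexI[of _ k]])
        (simp_all add: c_def False normal_density_moments[OF assms])
  qed
  finally show "integral\<^sup>L (noise_measure s) (\<lambda>v. v k * v l) = (if k = l then s\<^sup>2 else 0)" .
qed

lemma noise_measure_affine_mult:
  fixes b b' :: "'n::finite \<Rightarrow> real"
  assumes "s > 0"
  shows "integrable (noise_measure s)
           (\<lambda>v. (a + (\<Sum>k\<in>UNIV. b k * v k)) * (a' + (\<Sum>k\<in>UNIV. b' k * v k)))"
    and "integral\<^sup>L (noise_measure s)
           (\<lambda>v. (a + (\<Sum>k\<in>UNIV. b k * v k)) * (a' + (\<Sum>k\<in>UNIV. b' k * v k)))
         = a * a' + s\<^sup>2 * (\<Sum>k\<in>UNIV. b k * b' k)"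
proof -
  interpret prob_space "noise_measure s :: ('n \<Rightarrow> real) measure"
    using prob_space_noise_measure[OF assms] .
  note m1 = noise_measure_coord[OF assms] and m2 = noise_measure_coord_mult[OF assms]
  have expand: "(a + (\<Sum>k\<in>UNIV. b k * v k)) * (a' + (\<Sum>k\<in>UNIV. b' k * v k))
     = a * a' + (\<Sum>k\<in>UNIV. (a * b' k) * v k) + (\<Sum>k\<in>UNIV. (a' * b k) * v k)
       + (\<Sum>k\<in>UNIV. \<Sum>l\<in>UNIV. (b k * b' l) * (v k * v l))" for v :: "'n \<Rightarrow> real"
    by (simp add: algebra_simps sum_distrib_left sum_product sum.distrib,
        subst sum.swap, simp add: mult_ac)
  show "integrable (noise_measure s)
           (\<lambda>v. (a + (\<Sum>k\<in>UNIV. b k * v k)) * (a' + (\<Sum>k\<in>UNIV. b' k * v k)))"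
    unfolding expand by (intro Bochner_Integration.integrable_add Bochner_Integration.integrable_sum
        Bochner_Integration.integrable_mult_right m1(1) m2(1) integrable_const)
  have "integral\<^sup>L (noise_measure s)
           (\<lambda>v. (a + (\<Sum>k\<in>UNIV. b k * v k)) * (a' + (\<Sum>k\<in>UNIV. b' k * v k)))
      = a * a' + (\<Sum>k\<in>UNIV. \<Sum>l\<in>UNIV. (b k * b' l) * (if k = l then s\<^sup>2 else 0))"
    unfolding expand
    by (simp add: Bochner_Integration.integral_add Bochner_Integration.integral_sum
        Bochner_Integration.integrable_sum m1 m2 prob_space del: sum_distrib_left)
  also have "\<dots> = a * a' + s\<^sup>2 * (\<Sum>k\<in>UNIV. b k * b' k)"
    by (simp add: sum_distrib_left mult_ac if_distrib cong: if_cong)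
  finally show "integral\<^sup>L (noise_measure s)
           (\<lambda>v. (a + (\<Sum>k\<in>UNIV. b k * v k)) * (a' + (\<Sum>k\<in>UNIV. b' k * v k)))
         = a * a' + s\<^sup>2 * (\<Sum>k\<in>UNIV. b k * b' k)" .
qed

lemma integrable_matrix_entrywise:
  fixes F :: "'a \<Rightarrow> real^'m::finite^'n::finite"
  assumes "\<And>i j. integrable M (\<lambda>x. F x $ i $ j)"
  shows "integrable M F"
proof -
  have "integrable M (\<lambda>x. \<Sum>b\<in>Basis. (F x \<bullet> b) *\<^sub>R b)"
    using assms by (auto simp: Basis_vec_def inner_axis intro!: Bochner_Integration.integrable_sum)
  then show ?thesis
    by (simp add: euclidean_representation)
qed

lemma trace_integral:
  fixes F :: "'a \<Rightarrow> real^'n::finite^'n"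
  assumes "integrable M F"
  shows "trace (integral\<^sup>L M F) = (\<Sum>i\<in>UNIV. integral\<^sup>L M (\<lambda>x. F x $ i $ i))"
  unfolding trace_def
  using integral_bounded_linear[OF bounded_linear_compose[OF bounded_linear_vec_nth
      bounded_linear_vec_nth] assms]
  by simp

lemma trace_noise_integral_outer_prod_affine:
  fixes e :: "('n::finite \<Rightarrow> real) \<Rightarrow> real^'m::finite"
  assumes s: "s > 0" and e: "\<And>v j. e v $ j = a j + (\<Sum>k\<in>UNIV. B j k * v k)"
  shows "trace (integral\<^sup>L (noise_measure s) (\<lambda>v. outer_prod (e v)))
       = (\<Sum>j\<in>UNIV. (a j)\<^sup>2 + s\<^sup>2 * (\<Sum>k\<in>UNIV. (B j k)\<^sup>2))"
proof -
  have "integrable (noise_measure s) (\<lambda>v. outer_prod (e v))"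
    by (rule integrable_matrix_entrywise)
      (simp add: outer_prod_def e noise_measure_affine_mult(1)[OF s])
  then show ?thesis
    by (simp add: trace_integral outer_prod_def e noise_measure_affine_mult(2)[OF s]
        power2_eq_square)
qed

definition diag_mat :: "('n \<Rightarrow> 'a::zero) \<Rightarrow> 'a^'n^'n" where
  "diag_mat d = (\<chi> i j. if i = j then d i else 0)"

lemma Lam_eq_diag_mat: "Lam blk lam = diag_mat (\<lambda>j. lam (blk j))"
  by (simp add: Lam_def diag_mat_def)

lemma diag_mat_mult:
  "diag_mat a ** diag_mat b = diag_mat (\<lambda>i. (a i :: 'a::semiring_1) * b i)"
  by (simp add: diag_mat_def matrix_matrix_mult_def vec_eq_iff if_distrib[of "\<lambda>y. y * _"]
      if_distrib[of "\<lambda>y. _ * y"] cong: if_cong)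

lemma diag_mat_vector_mult: "diag_mat d *v x = (\<chi> i. (d i :: 'a::semiring_1) * x $ i)"
  by (simp add: diag_mat_def matrix_vector_mult_def vec_eq_iff if_distrib[of "\<lambda>y. y * _"]
      cong: if_cong)

lemma matrix_add_rdistrib: "(A + B) ** C = A ** C + B ** (C :: 'a::semiring_1^_^_)"
  by (simp add: matrix_matrix_mult_def vec_eq_iff distrib_right sum.distrib)

lemma matrix_diff_ldistrib: "A ** (B - C) = A ** B - A ** (C :: 'a::ring_1^_^_)"
  by (simp add: matrix_matrix_mult_def vec_eq_iff right_diff_distrib sum_subtractf)

lemma matrix_scaleR_mult_left: "(k *\<^sub>R A) ** B = k *\<^sub>R (A ** B :: real^_^_)"
  by (simp add: scalar_matrix_assoc)

lemma matrix_scaleR_mult_right: "A ** (k *\<^sub>R B) = k *\<^sub>R (A ** B :: real^_^_)"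
  by (simp add: matrix_scalar_ac scalar_matrix_assoc)

lemma matrix_mul_matrix_inv:
  fixes A :: "real^'n::finite^'n"
  assumes "A ** B = mat 1"
  shows "A ** matrix_inv A = mat 1"
proof -
  have "\<exists>A'. A ** A' = mat 1 \<and> A' ** A = mat 1"
    using assms matrix_left_right_inverse by blast
  then show ?thesis
    unfolding matrix_inv_def by (rule someI2_ex) blast
qed

lemma ridge_gram_push_through:
  fixes G :: "real^'m::finite^'n::finite" and l :: "'m \<Rightarrow> real"
  assumes GG: "transpose G ** G = c *\<^sub>R mat 1" and s: "s \<noteq> 0"
    and nz: "\<And>j. c * l j + s\<^sup>2 \<noteq> 0"
  shows "diag_mat l ** transpose G ** matrix_inv (G ** diag_mat l ** transpose G + s\<^sup>2 *\<^sub>R mat 1)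
       = diag_mat (\<lambda>j. l j / (c * l j + s\<^sup>2)) ** transpose G"
proof -
  define d where "d j = l j / (c * l j + s\<^sup>2)" for j
  define L D T M where "L = diag_mat l" and "D = diag_mat d"
    and "T = transpose G" and "M = G ** diag_mat l ** transpose G + s\<^sup>2 *\<^sub>R mat 1"
  have TG: "T ** G = c *\<^sub>R mat 1"
    using GG by (simp add: T_def)
  have "c * (l j * d j) + s\<^sup>2 * d j = l j" for j
  proof -
    have "(c * l j + s\<^sup>2) * d j = l j"
      using nz[of j] by (simp add: d_def)
    then show ?thesis
      by (simp add: algebra_simps)
  qed
  then have LD: "L ** D = D ** L" "L = c *\<^sub>R (L ** D) + s\<^sup>2 *\<^sub>R D"
    unfolding L_def D_def diag_mat_mult by (simp_all add: diag_mat_def vec_eq_iff mult.commute)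
  have "D ** T ** M = D ** (T ** G) ** L ** T + s\<^sup>2 *\<^sub>R (D ** T)"
    by (simp add: M_def L_def[symmetric] T_def[symmetric] matrix_add_ldistrib matrix_mul_assoc
        matrix_scaleR_mult_right)
  also have "\<dots> = (c *\<^sub>R (L ** D) + s\<^sup>2 *\<^sub>R D) ** T"
    by (simp add: TG LD(1) matrix_add_rdistrib matrix_scaleR_mult_left matrix_scaleR_mult_right)
  finally have DTM: "D ** T ** M = L ** T"
    using LD(2) by simp
  have "M ** (G ** D ** T) = G ** L ** (T ** G) ** D ** T + s\<^sup>2 *\<^sub>R (G ** D ** T)"
    by (simp add: M_def L_def[symmetric] T_def[symmetric] matrix_add_rdistrib matrix_mul_assoc
        matrix_scaleR_mult_left)
  also have "\<dots> = G ** (c *\<^sub>R (L ** D) + s\<^sup>2 *\<^sub>R D) ** T"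
    by (simp add: TG matrix_add_ldistrib matrix_add_rdistrib matrix_mul_assoc
        matrix_scaleR_mult_left matrix_scaleR_mult_right)
  finally have "M ** (G ** D ** T) = G ** L ** T"
    using LD(2) by simp
  then have "M ** ((1 / s\<^sup>2) *\<^sub>R (mat 1 - G ** D ** T)) = mat 1"
    using s by (simp add: matrix_scaleR_mult_right matrix_diff_ldistrib M_def L_def T_def)
  then have inv: "M ** matrix_inv M = mat 1"
    by (rule matrix_mul_matrix_inv)
  have "L ** T ** matrix_inv M = D ** T ** M ** matrix_inv M"
    by (simp add: DTM)
  also have "\<dots> = D ** T"
    by (simp add: matrix_mul_assoc[symmetric] inv)
  finally show ?thesis
    by (simp add: L_def D_def T_def M_def d_def[abs_def])
qed

lemma theta_hat_orthogonal_design: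
  fixes G :: "real^'m::finite^'n::finite"
  assumes GG: "transpose G ** G = c *\<^sub>R mat 1" and s: "s \<noteq> 0"
    and nz: "\<And>j. c * lam (blk j) + s\<^sup>2 \<noteq> 0"
  shows "theta_hat G blk s lam y
       = (\<chi> j. lam (blk j) / (c * lam (blk j) + s\<^sup>2) * (transpose G *v y) $ j)"
  unfolding theta_hat_def Lam_eq_diag_mat ridge_gram_push_through[OF GG s nz]
  by (simp add: matrix_vector_mul_assoc[symmetric] diag_mat_vector_mult)

lemma theta_hat_error_orthogonal_design:
  fixes G :: "real^'m::finite^'n::finite"
  assumes GG: "transpose G ** G = c *\<^sub>R mat 1" and s: "s \<noteq> 0"
    and nz: "\<And>j. c * lam (blk j) + s\<^sup>2 \<noteq> 0"
  defines "d j \<equiv> lam (blk j) / (c * lam (blk j) + s\<^sup>2)"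
  shows "(theta_hat G blk s lam (G *v theta + w) - theta) $ j
       = (c * d j - 1) * theta $ j + d j * (transpose G *v w) $ j"
proof -
  have "transpose G *v (G *v theta + w) = c *\<^sub>R theta + transpose G *v w"
    by (simp add: matrix_vector_right_distrib matrix_vector_mul_assoc GG
        scaleR_matrix_vector_assoc[symmetric])
  then show ?thesis
    by (simp add: theta_hat_orthogonal_design[where lam = lam and blk = blk, OF GG s nz] d_def
        algebra_simps add_divide_distrib)
qed

definition block_risk :: "real \<Rightarrow> real \<Rightarrow> real \<Rightarrow> real \<Rightarrow> real \<Rightarrow> real" where
  "block_risk c s k T x =
     (s\<^sup>2 / (c * x + s\<^sup>2))\<^sup>2 * T + k * s\<^sup>2 * c * (x / (c * x + s\<^sup>2))\<^sup>2"

lemma sum_block_risk: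
  "(\<Sum>j\<in>A. block_risk c s (k j) (T j) x) = block_risk c s (\<Sum>j\<in>A. k j) (\<Sum>j\<in>A. T j) x"
  by (simp add: block_risk_def sum.distrib sum_distrib_left sum_distrib_right)

lemma block_risk_excess:
  assumes "c * x + s\<^sup>2 \<noteq> 0" and "c * T + k * s\<^sup>2 \<noteq> 0" and "k \<noteq> 0"
  shows "block_risk c s k T x - block_risk c s k T (T / k)
       = c * s ^ 4 * (T - k * x)\<^sup>2 / ((c * x + s\<^sup>2)\<^sup>2 * (c * T + k * s\<^sup>2))"
proof -
  define a b where "a = c * x + s\<^sup>2" and "b = c * T + k * s\<^sup>2"
  have a: "a \<noteq> 0" and b: "b \<noteq> 0"
    using assms by (simp_all add: a_def b_def)
  have "block_risk c s k T x = (s ^ 4 * T + k * s\<^sup>2 * c * x\<^sup>2) / a\<^sup>2"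
    unfolding block_risk_def a_def[symmetric]
    using a by (simp add: field_simps power2_eq_square power4_eq_xxxx)
  moreover have "block_risk c s k T (T / k) = k * s\<^sup>2 * T / b"
  proof -
    have "c * (T / k) + s\<^sup>2 = b / k"
      using assms(3) by (simp add: b_def field_simps)
    then have "block_risk c s k T (T / k)
        = (k * s\<^sup>2)\<^sup>2 * T / b\<^sup>2 + k * s\<^sup>2 * c * T\<^sup>2 / b\<^sup>2"
      unfolding block_risk_def using assms(3) by (simp add: power_divide power_mult_distrib)
    also have "\<dots> = k * s\<^sup>2 * T * (c * T + k * s\<^sup>2) / b\<^sup>2"
      by (simp add: power2_eq_square algebra_simps add_divide_distrib)
    also have "\<dots> = k * s\<^sup>2 * T / b"
      unfolding b_def[symmetric] using b by (simp add: power2_eq_square)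
    finally show ?thesis .
  qed
  moreover have "(s ^ 4 * T + k * s\<^sup>2 * c * x\<^sup>2) * b - k * s\<^sup>2 * T * a\<^sup>2
      = c * s ^ 4 * (T - k * x)\<^sup>2"
    by (simp add: a_def b_def algebra_simps power2_eq_square power4_eq_xxxx)
  ultimately have "block_risk c s k T x - block_risk c s k T (T / k)
      = c * s ^ 4 * (T - k * x)\<^sup>2 / (a\<^sup>2 * b)"
    using a b by (simp add: diff_frac_eq)
  then show ?thesis
    by (simp add: a_def b_def)
qed

lemma block_risk_minimal:
  assumes "c \<ge> 0" and "s \<noteq> 0" and "k > 0" and "T \<ge> 0" and "x \<ge> 0"
  shows "block_risk c s k T (T / k) \<le> block_risk c s k T x"
proof -
  have "c * x + s\<^sup>2 > 0" and "c * T + k * s\<^sup>2 > 0"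
    using assms by (simp_all add: add_nonneg_pos)
  then have "0 \<le> block_risk c s k T x - block_risk c s k T (T / k)"
    using assms by (simp add: block_risk_excess)
  then show ?thesis
    by simp
qed

lemma MSE_orthogonal_design:
  fixes G :: "real^'m::finite^'n::finite" and blk :: "'m \<Rightarrow> 'p"
  assumes GG: "transpose G ** G = c *\<^sub>R mat 1" and s: "s > 0" and lam: "\<And>i. lam i \<ge> 0"
  shows "MSE G blk s theta lam = (\<Sum>j\<in>UNIV. block_risk c s 1 ((theta $ j)\<^sup>2) (lam (blk j)))"
proof -
  have col: "(\<Sum>k\<in>UNIV. (G $ k $ j)\<^sup>2) = c" for j
  proof -
    have "(transpose G ** G) $ j $ j = c"
      using GG by (simp add: mat_def)
    then show ?thesis
      by (simp add: matrix_matrix_mult_def transpose_def power2_eq_square)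
  qed
  then have "c \<ge> 0"
    by (metis sum_nonneg zero_le_power2)
  with s lam have pos: "c * lam (blk j) + s\<^sup>2 > 0" for j
    by (simp add: add_nonneg_pos)
  define d where "d j = lam (blk j) / (c * lam (blk j) + s\<^sup>2)" for j
  have s0: "s \<noteq> 0" and nz: "c * lam (blk j) + s\<^sup>2 \<noteq> 0" for j
    using s pos[of j] by simp_all
  have err: "(theta_hat G blk s lam (G *v theta + w) - theta) $ j
      = (c * d j - 1) * theta $ j + d j * (transpose G *v w) $ j" for w j
    using theta_hat_error_orthogonal_design[where lam = lam and blk = blk, OF GG s0 nz]
    unfolding d_def .
  have "MSE G blk s theta lam
      = (\<Sum>j\<in>UNIV. ((c * d j - 1) * theta $ j)\<^sup>2 + s\<^sup>2 * (\<Sum>k\<in>UNIV. (d j * G $ k $ j)\<^sup>2))"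
    unfolding MSE_def
  proof (rule trace_noise_integral_outer_prod_affine[OF s])
    fix v :: "'n \<Rightarrow> real" and j
    show "(theta_hat G blk s lam (G *v theta + (\<chi> i. v i)) - theta) $ j
        = (c * d j - 1) * theta $ j + (\<Sum>k\<in>UNIV. d j * G $ k $ j * v k)"
      unfolding err by (simp add: matrix_vector_mult_def transpose_def sum_distrib_left mult.assoc)
  qed
  also have "\<dots> = (\<Sum>j\<in>UNIV. block_risk c s 1 ((theta $ j)\<^sup>2) (lam (blk j)))"
  proof (rule sum.cong[OF refl])
    fix j
    have "c * d j - 1 = - (s\<^sup>2 / (c * lam (blk j) + s\<^sup>2))"
      using pos[of j] by (simp add: d_def field_simps)
    moreover have "(\<Sum>k\<in>UNIV. (d j * G $ k $ j)\<^sup>2) = (d j)\<^sup>2 * c"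
      by (simp add: power_mult_distrib sum_distrib_left[symmetric] col)
    ultimately show "((c * d j - 1) * theta $ j)\<^sup>2 + s\<^sup>2 * (\<Sum>k\<in>UNIV. (d j * G $ k $ j)\<^sup>2)
        = block_risk c s 1 ((theta $ j)\<^sup>2) (lam (blk j))"
      unfolding block_risk_def d_def[symmetric] by (simp add: power_mult_distrib power_divide)
  qed
  finally show ?thesis .
qed

lemma MSE_eq_sum_block_risk:
  fixes G :: "real^'m::finite^'n::finite" and blk :: "'m \<Rightarrow> 'p::finite"
  assumes GG: "transpose G ** G = c *\<^sub>R mat 1" and s: "s > 0" and lam: "\<And>i. lam i \<ge> 0"
  shows "MSE G blk s theta lam = (\<Sum>i\<in>UNIV.
           block_risk c s (card {j. blk j = i}) (\<Sum>j\<in>{j. blk j = i}. (theta $ j)\<^sup>2) (lam i))"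
proof -
  have "MSE G blk s theta lam
      = (\<Sum>i\<in>UNIV. \<Sum>j\<in>{j. blk j = i}. block_risk c s 1 ((theta $ j)\<^sup>2) (lam (blk j)))"
    unfolding MSE_orthogonal_design[OF GG s lam]
    using sum.group[of UNIV UNIV blk "\<lambda>j. block_risk c s 1 ((theta $ j)\<^sup>2) (lam (blk j))"]
    by simp
  also have "\<dots> = (\<Sum>i\<in>UNIV. \<Sum>j\<in>{j. blk j = i}. block_risk c s 1 ((theta $ j)\<^sup>2) (lam i))"
    by (intro sum.cong) auto
  finally show ?thesis
    by (simp add: sum_block_risk)
qed

theorem corollary8:
  fixes G :: "real^'m::finite^'n::finite"
    and blk :: "'m \<Rightarrow> 'p::finite"
    and s :: real
    and theta_bar :: "real^'m"
  assumes "surj blk"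
    and "transpose G ** G = real CARD('n) *\<^sub>R mat 1"
    and "s > 0"
  shows "(\<forall>i. lam_opt blk theta_bar i \<ge> 0) \<and>
         (\<forall>lam :: 'p \<Rightarrow> real. (\<forall>i. lam i \<ge> 0) \<longrightarrow>
            MSE G blk s theta_bar (lam_opt blk theta_bar) \<le> MSE G blk s theta_bar lam)"
proof (intro conjI allI impI)
  have card_pos: "real (card {j. blk j = i}) > 0" for i
  proof -
    have "{j. blk j = i} \<noteq> {}"
      using surjD[OF \<open>surj blk\<close>, of i] by auto
    then show ?thesis
      by (simp add: card_gt_0_iff)
  qed
  have norm_nonneg: "(\<Sum>j\<in>{j. blk j = i}. (theta_bar $ j)\<^sup>2) \<ge> 0" for i
    by (simp add: sum_nonneg)
  show opt_nonneg: "lam_opt blk theta_bar i \<ge> 0" for i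
    unfolding lam_opt_def using card_pos norm_nonneg by (simp add: divide_nonneg_pos)
  fix lam :: "'p \<Rightarrow> real"
  assume lam: "\<forall>i. lam i \<ge> 0"
  have "MSE G blk s theta_bar (lam_opt blk theta_bar) = (\<Sum>i\<in>UNIV. block_risk (real CARD('n)) s
          (card {j. blk j = i}) (\<Sum>j\<in>{j. blk j = i}. (theta_bar $ j)\<^sup>2) (lam_opt blk theta_bar i))"
    by (rule MSE_eq_sum_block_risk[where lam = "lam_opt blk theta_bar", OF assms(2,3) opt_nonneg])
  also have "\<dots> \<le> (\<Sum>i\<in>UNIV. block_risk (real CARD('n)) s
          (card {j. blk j = i}) (\<Sum>j\<in>{j. blk j = i}. (theta_bar $ j)\<^sup>2) (lam i))"
    unfolding lam_opt_def using card_pos norm_nonneg \<open>s > 0\<close> lam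
    by (intro sum_mono block_risk_minimal) auto
  also have "\<dots> = MSE G blk s theta_bar lam"
    using lam by (simp add: MSE_eq_sum_block_risk[OF assms(2,3)])
  finally show "MSE G blk s theta_bar (lam_opt blk theta_bar) \<le> MSE G blk s theta_bar lam" .
qed

end
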